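(* Let $K$ be a finite oriented simplicial complex and let $p,q$ be integers with $0\le q\le p$. Fix the bases of $C_m(K)$ given by the oriented $m$-simplices, and for integers $m\ge k\ge0$ let $B_{m,k}=(b^{(m,k)}_{ij})$ be the matrix of $\partial_{m,k}\colon C_m(K)\to C_{m-k}(K)$ in these bases (rows indexed by $(m-k)$-simplices, columns by $m$-simplices). Then for every $q$-simplex $\sigma_j^{(q)}$, $$\deg_U^p(\sigma_j^{(q)})= -1+\sum_{q'=0}^{p}\sum_k\min\Big(1,\sum_{i}|b_{ji}^{(q+h,h)}|\,|b_{ki}^{(q'+h',h')}|\Big),$$ where $h=p-q$, $h'=p-q'$, $i$ runs over the $p$-simplices and $k$ over the $q'$-simplices of $K$.
   Context: $K$ is a finite abstract simplicial complex (finite family of nonempty finite vertex sets closed under nonempty subsets); a $q$-simplex has $q+1$ vertices; a face is a simplex of $K$ contained in a given simplex (a simplex is a face of itself). Orientations: orderings of vertices modulo even permutations, $[v_{\eta(0)},\dots,v_{\eta(m)}]=\operatorname{sign}(\eta)[v_0,\dots,v_m]$; each simplex has a fixed orientation; $C_m(K)$ is the real vector space with basis the oriented $m$-simplices (opposite orientation = negative). Multi-parameter boundary operator: for $m\ge k\ge0$, $\partial_{m,k}\colon C_m(K)\to C_{m-k}(K)$ is linear with $\partial_{m,k}([v_{\eta(0)},\dots,v_{\eta(m)}])=\sum_{J}\operatorname{sign}(\eta)\operatorname{sign}(\epsilon_J)[v_0,\dots,\widehat{v_{j_1}},\dots,\widehat{v_{j_k}},\dots,v_m]$, summing over subsets $J=\{j_1<\dots<j_k\}\subseteq\{0,\dots,m\}$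 (hatted vertices removed, others in increasing order), $\epsilon_J$ the permutation of $\{0,\dots,m\}$ with $r\mapsto j_{r+1}$ for $r<k$ and $k,\dots,m$ mapped increasingly onto the complement of $J$. In particular $\partial_{m,0}$ is the identity, and $b^{(m,k)}_{ij}$ is $\pm1$ if the $i$-th $(m-k)$-simplex is a face of the $j$-th $m$-simplex and $0$ otherwise. $p$-upper adjacency: two simplices are $p$-upper adjacent if some $p$-simplex of $K$ contains both as faces. The $p$-upper degree $\deg_U^p(\sigma^{(q)})$ is the number of simplices of $K$ (of any dimension), other than $\sigma^{(q)}$ itself, that are $p$-upper adjacent to $\sigma^{(q)}$.
   Formalization: The formula is asserted only for those q-simplices $\sigma_j^{(q)}$ that are faces of some p-simplex of K. The statement above fails without it. *)

theory Defs
  imports Main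
begin

definition simplicial_complex :: "'a set set \<Rightarrow> bool" where
  "simplicial_complex K \<longleftrightarrow> finite K \<and>
     (\<forall>s\<in>K. s \<noteq> {} \<and> finite s \<and> (\<forall>t. t \<noteq> {} \<and> t \<subseteq> s \<longrightarrow> t \<in> K))"

definition orientation :: "'a set set \<Rightarrow> ('a set \<Rightarrow> 'a list) \<Rightarrow> bool" where
  "orientation K ori \<longleftrightarrow> (\<forall>s\<in>K. distinct (ori s) \<and> set (ori s) = s)"

definition simplices :: "'a set set \<Rightarrow> nat \<Rightarrow> 'a set set" where
  "simplices K q = {s\<in>K. card s = Suc q}"

definition perm_sign :: "nat list \<Rightarrow> int" where
  "perm_sign xs = (-1) ^ card {(i, j). i < j \<and> j < length xs \<and> xs ! i > xs ! j}"

definition pos :: "'a list \<Rightarrow> 'a \<Rightarrow> nat" where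
  "pos ys x = (LEAST i. i < length ys \<and> ys ! i = x)"

text \<open>Entry of the matrix of the multi-parameter boundary operator
  \<open>\<partial>_{m,k}\<close> in the bases of oriented simplices: row index the (m-k)-simplex tau,
  column index the m-simplex sigma. Writing the fixed orientation of sigma as
  [v_0,...,v_m], the term for J (the removed positions) has coefficient sign(eps_J),
  and the resulting ordered face [v_0,..,hat..,v_m] equals sign(eta) times the fixed
  orientation of tau, where eta is the reordering permutation.\<close>
definition bcoef :: "'a set set \<Rightarrow> ('a set \<Rightarrow> 'a list) \<Rightarrow> nat \<Rightarrow> nat \<Rightarrow> 'a set \<Rightarrow> 'a set \<Rightarrow> int" where
  "bcoef K ori m k tau sigma =
    (if k \<le> m \<and> sigma \<in> simplices K m \<and> tau \<in> simplices K (m - k) \<and> tau \<subseteq> sigma then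
       (let vs = ori sigma;
            J = filter (\<lambda>j. vs ! j \<notin> tau) [0..<Suc m];
            C = filter (\<lambda>j. vs ! j \<in> tau) [0..<Suc m];
            R = map ((!) vs) C
        in perm_sign (J @ C) * perm_sign (map (pos (ori tau)) R))
     else 0)"

definition upper_degree :: "'a set set \<Rightarrow> nat \<Rightarrow> 'a set \<Rightarrow> nat" where
  "upper_degree K p sigma =
     card {tau\<in>K. tau \<noteq> sigma \<and> (\<exists>rho\<in>simplices K p. sigma \<subseteq> rho \<and> tau \<subseteq> rho)}"

end

theory Submission
  imports Defs
begin

text \<open>Every entry of a boundary matrix B(m,k) has absolute value 1 on incident pairs and 0 elsewhere,
  so the inner sum counts the common p-dimensional cofaces of \<open>\<sigma>\<close> and \<open>\<tau>\<close>, and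
  \<open>min 1\<close> turns this count into the indicator of p-upper adjacency. A simplex that is
  p-upper adjacent to \<open>\<sigma>\<close> lies in a p-simplex, so it has dimension at most p; hence the
  double sum counts all simplices p-upper adjacent to \<open>\<sigma>\<close>, including \<open>\<sigma>\<close> itself.
  Only absolute values of entries occur, so the choice of orientation is irrelevant.\<close>

definition upper_adjacent :: "'a set set \<Rightarrow> nat \<Rightarrow> 'a set \<Rightarrow> 'a set \<Rightarrow> bool" where
  "upper_adjacent K p sigma tau \<longleftrightarrow> (\<exists>rho\<in>simplices K p. sigma \<subseteq> rho \<and> tau \<subseteq> rho)"

lemma abs_perm_sign [simp]: "\<bar>perm_sign xs\<bar> = 1"
  unfolding perm_sign_def by (simp add: power_abs)

lemma abs_bcoef:
  "\<bar>bcoef K ori m k tau sigma\<bar> =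
     of_bool (k \<le> m \<and> sigma \<in> simplices K m \<and> tau \<in> simplices K (m - k) \<and> tau \<subseteq> sigma)"
  unfolding bcoef_def Let_def by (simp add: abs_mult)

lemma sum_abs_bcoef_products:
  assumes "finite K" and "q \<le> p" and "q' \<le> p"
    and "sigma \<in> simplices K q" and "tau \<in> simplices K q'"
  shows "(\<Sum>rho\<in>simplices K p.
            \<bar>bcoef K ori (q + (p - q)) (p - q) sigma rho\<bar> * \<bar>bcoef K ori (q' + (p - q')) (p - q') tau rho\<bar>)
         = int (card {rho\<in>simplices K p. sigma \<subseteq> rho \<and> tau \<subseteq> rho})"
proof -
  have "finite (simplices K p)"
    using assms(1) by (simp add: simplices_def)
  moreover have "(\<Sum>rho\<in>simplices K p.
            \<bar>bcoef K ori (q + (p - q)) (p - q) sigma rho\<bar> * \<bar>bcoef K ori (q' + (p - q')) (p - q') tau rho\<bar>)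
         = (\<Sum>rho\<in>simplices K p. of_bool (sigma \<subseteq> rho \<and> tau \<subseteq> rho))"
    using assms(2-5) by (intro sum.cong refl) (simp add: abs_bcoef)
  ultimately show ?thesis
    by (simp add: Int_def conj_commute)
qed

lemma min_1_int_card: "finite A \<Longrightarrow> min 1 (int (card A)) = of_bool (A \<noteq> {})"
  by (cases "A = {}") (simp_all add: Suc_le_eq card_gt_0_iff)

lemma min_1_sum_abs_bcoef_products:
  assumes "finite K" and "q \<le> p" and "q' \<le> p"
    and "sigma \<in> simplices K q" and "tau \<in> simplices K q'"
  shows "min 1 (\<Sum>rho\<in>simplices K p.
            \<bar>bcoef K ori (q + (p - q)) (p - q) sigma rho\<bar> * \<bar>bcoef K ori (q' + (p - q')) (p - q') tau rho\<bar>)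
         = of_bool (upper_adjacent K p sigma tau)"
proof -
  have "finite {rho\<in>simplices K p. sigma \<subseteq> rho \<and> tau \<subseteq> rho}"
    using assms(1) by (simp add: simplices_def)
  then show ?thesis
    unfolding sum_abs_bcoef_products[OF assms] by (simp add: min_1_int_card upper_adjacent_def) blast
qed

lemma upper_adjacent_dim:
  assumes "simplicial_complex K" and "tau \<in> K" and "upper_adjacent K p sigma tau"
  shows "\<exists>q'\<le>p. tau \<in> simplices K q'"
proof -
  obtain rho where rho: "rho \<in> simplices K p" "tau \<subseteq> rho"
    using assms(3) unfolding upper_adjacent_def by blast
  have "finite rho" "card rho = Suc p"
    using rho(1) assms(1) unfolding simplices_def simplicial_complex_def by auto
  then have "card tau \<le> Suc p"
    using rho(2) card_mono by metis
  moreover have "card tau > 0"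
    using assms(1,2) unfolding simplicial_complex_def by (auto simp: card_gt_0_iff)
  ultimately show ?thesis
    using assms(2) unfolding simplices_def by (intro exI[of _ "card tau - 1"]) auto
qed

lemma upper_degree_as_sum:
  assumes "simplicial_complex K" and "sigma \<in> K" and "upper_adjacent K p sigma sigma"
  shows "int (upper_degree K p sigma) =
           -1 + (\<Sum>q'=0..p. \<Sum>tau\<in>simplices K q'. of_bool (upper_adjacent K p sigma tau))"
proof -
  have finK: "finite K"
    using assms(1) unfolding simplicial_complex_def by blast
  then have fin: "finite (simplices K n)" for n
    by (simp add: simplices_def)
  have neighbours: "(\<Union>q'\<in>{0..p}. simplices K q') \<inter> {tau. upper_adjacent K p sigma tau}
                      = insert sigma {tau\<in>K. tau \<noteq> sigma \<and> upper_adjacent K p sigma tau}"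
  proof (intro equalityI subsetI)
    fix tau
    assume "tau \<in> insert sigma {tau\<in>K. tau \<noteq> sigma \<and> upper_adjacent K p sigma tau}"
    then have "tau \<in> K" and "upper_adjacent K p sigma tau"
      using assms(2,3) by auto
    then show "tau \<in> (\<Union>q'\<in>{0..p}. simplices K q') \<inter> {tau. upper_adjacent K p sigma tau}"
      using upper_adjacent_dim[OF assms(1)] by fastforce
  qed (auto simp: simplices_def)
  have "(\<Sum>q'=0..p. \<Sum>tau\<in>simplices K q'. of_bool (upper_adjacent K p sigma tau))
        = (\<Sum>tau\<in>(\<Union>q'\<in>{0..p}. simplices K q'). (of_bool (upper_adjacent K p sigma tau) :: int))"
    by (rule sum.UNION_disjoint[symmetric]) (use fin in \<open>auto simp: simplices_def\<close>)
  also have "\<dots> = int (card ((\<Union>q'\<in>{0..p}. simplices K q') \<inter> {tau. upper_adjacent K p sigma tau}))"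
    using fin by simp
  also have "\<dots> = int (card (insert sigma {tau\<in>K. tau \<noteq> sigma \<and> upper_adjacent K p sigma tau}))"
    by (simp only: neighbours)
  also have "\<dots> = 1 + int (upper_degree K p sigma)"
    using finK by (simp add: upper_degree_def upper_adjacent_def)
  finally show ?thesis by simp
qed

theorem theoremt:
  fixes K :: "'a set set" and ori :: "'a set \<Rightarrow> 'a list" and p q :: nat and sigma :: "'a set"
  assumes "simplicial_complex K"
    and "orientation K ori"
    and "q \<le> p"
    and "sigma \<in> simplices K q"
    and "\<exists>rho\<in>simplices K p. sigma \<subseteq> rho"
  shows "int (upper_degree K p sigma) =
    -1 + (\<Sum>q'=0..p. \<Sum>k\<in>simplices K q'.
            min 1 (\<Sum>i\<in>simplices K p.
               \<bar>bcoef K ori (q + (p - q)) (p - q) sigma i\<bar> * \<bar>bcoef K ori (q' + (p - q')) (p - q') k i\<bar>))"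
proof -
  have "finite K"
    using assms(1) unfolding simplicial_complex_def by blast
  then have "(\<Sum>q'=0..p. \<Sum>k\<in>simplices K q'.
            min 1 (\<Sum>i\<in>simplices K p.
               \<bar>bcoef K ori (q + (p - q)) (p - q) sigma i\<bar> * \<bar>bcoef K ori (q' + (p - q')) (p - q') k i\<bar>))
        = (\<Sum>q'=0..p. \<Sum>k\<in>simplices K q'. of_bool (upper_adjacent K p sigma k))"
    using assms(3,4) by (intro sum.cong refl min_1_sum_abs_bcoef_products) auto
  moreover have "sigma \<in> K" and "upper_adjacent K p sigma sigma"
    using assms(4,5) by (auto simp: simplices_def upper_adjacent_def)
  ultimately show ?thesis
    using upper_degree_as_sum[OF assms(1)] by simp
qed

end
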